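(* Let $V$ be a vertex algebra and $M$ a subspace of $V$ with $C_2(V)\subseteq M$ and $\dim_{\mathbb{C}}M/C_2(V)<\infty$. Then $M$ is an $MZ_{0,-1}$-subspace of $V$ if and only if $r(M/C_2(V))$ is an ideal of the commutative associative algebra $V/C_2(V)$.
   Context: A vertex algebra $(V,Y,\mathbf{1})$ is over $\mathbb{C}$; for $u\in V$ write $Y(u,z)=\sum_{n\in\mathbb{Z}}u_nz^{-n-1}$ with $u_n\in\operatorname{End}V$. Iterated products are nested to the right: $v_{n_1}\cdots v_{n_t}v=v_{n_1}(\cdots(v_{n_t}v))$. $C_2(V)=\operatorname{span}_{\mathbb{C}}\{u_{-2}v: u,v\in V\}$; $V/C_2(V)$ is a commutative associative unital algebra with product $(a+C_2(V))(b+C_2(V))=a_{-1}b+C_2(V)$. For a subspace $M\subseteq V$: $r_{0,-1}(M)$ is the set of $v\in V$ for which there is $m\ge 0$ with $v_{n_1}\cdots v_{n_t}v\in M$ for all $t\ge m$ and all $n_1,\dots,n_t\in\{0,-1\}$. $lsr_{0,-1}(M)$ is the set of $v\in V$ such that for every $b\in V$ there is $m\ge0$ with $b_sv_{n_1}\cdots v_{n_t}v\in M$ for all $t\ge m$ and all $s,n_1,\dots,n_t\in\{0,-1\}$. $rsr_{0,-1}(M)$ is the set of $v\in V$ such that for every $w\in V$ there is $m\ge 0$ with $(v_{n_1}\cdots v_{n_t}v)_nw\in M$ for all $t\ge m$ and all $n,n_1,\dots,n_t\in\{0,-1\}$. $sr_{0,-1}(M)=lsr_{0,-1}(M)\cap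 rsr_{0,-1}(M)$. $M$ is an $MZ_{0,-1}$-subspace of $V$ if $r_{0,-1}(M)=sr_{0,-1}(M)$. For a commutative associative unital algebra $A$ and a subspace $U$: $r(U)=\{a\in A:\exists m\ge1,\ a^t\in U\ \forall t\ge m\}$. *)

theory Defs
  imports Complex_Main
begin

text \<open>A vertex algebra over the complex numbers, presented by its underlying complex
vector space (scalar multiplication sc), the modes md u n v = u_n v (so that
Y(u,z) = sum of u_n z^(-n-1)) and the vacuum vector vac.  The Jacobi identity is
stated in its equivalent component form (Borcherds identity); all occurring sums
are finite by the truncation axiom, expressed by requiring equality of all
sufficiently long partial sums.\<close>

definition borch_lhs ::
  "('v::ab_group_add \<Rightarrow> int \<Rightarrow> 'v \<Rightarrow> 'v) \<Rightarrow> (complex \<Rightarrow> 'v \<Rightarrow> 'v) \<Rightarrow> 'v \<Rightarrow> 'v \<Rightarrow> 'v \<Rightarrow> int \<Rightarrow> int \<Rightarrow> int \<Rightarrow> nat \<Rightarrow> 'v" where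
  "borch_lhs md sc u v w p q r N =
     (\<Sum>i=0..N. sc ((of_int p :: complex) gchoose i) (md (md u (r + int i) v) (p + q - int i) w))"

definition borch_rhs ::
  "('v::ab_group_add \<Rightarrow> int \<Rightarrow> 'v \<Rightarrow> 'v) \<Rightarrow> (complex \<Rightarrow> 'v \<Rightarrow> 'v) \<Rightarrow> 'v \<Rightarrow> 'v \<Rightarrow> 'v \<Rightarrow> int \<Rightarrow> int \<Rightarrow> int \<Rightarrow> nat \<Rightarrow> 'v" where
  "borch_rhs md sc u v w p q r N =
     (\<Sum>i=0..N. sc ((-1) ^ i * ((of_int r :: complex) gchoose i))
        (md u (p + r - int i) (md v (q + int i) w)
         - sc ((-1) powi r) (md v (q + r - int i) (md u (p + int i) w))))"

locale vertex_algebra =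
  vector_space sc for sc :: "complex \<Rightarrow> 'v::ab_group_add \<Rightarrow> 'v" +
  fixes md :: "'v \<Rightarrow> int \<Rightarrow> 'v \<Rightarrow> 'v"
    and vac :: 'v
  assumes md_add_left: "md (u + u') n v = md u n v + md u' n v"
    and md_scale_left: "md (sc c u) n v = sc c (md u n v)"
    and md_add_right: "md u n (v + v') = md u n v + md u n v'"
    and md_scale_right: "md u n (sc c v) = sc c (md u n v)"
    and truncation: "\<exists>N. \<forall>n\<ge>N. md u n v = 0"
    and vacuum: "md vac n v = (if n = -1 then v else 0)"
    and creation: "n \<ge> 0 \<Longrightarrow> md u n vac = 0"
    and creation_id: "md u (-1) vac = u"
    and borcherds: "\<exists>K. \<forall>N\<ge>K. borch_lhs md sc u v w p q r N = borch_rhs md sc u v w p q r N"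

definition C2 :: "(complex \<Rightarrow> 'v::ab_group_add \<Rightarrow> 'v) \<Rightarrow> ('v \<Rightarrow> int \<Rightarrow> 'v \<Rightarrow> 'v) \<Rightarrow> 'v set" where
  "C2 sc md = module.span sc {md u (-2) v | u v. True}"

definition iter :: "('v \<Rightarrow> int \<Rightarrow> 'v \<Rightarrow> 'v) \<Rightarrow> 'v \<Rightarrow> int list \<Rightarrow> 'v" where
  "iter md v ns = foldr (\<lambda>n x. md v n x) ns v"

definition r01 :: "('v \<Rightarrow> int \<Rightarrow> 'v \<Rightarrow> 'v) \<Rightarrow> 'v set \<Rightarrow> 'v set" where
  "r01 md M = {v. \<exists>m::nat. \<forall>ns. length ns \<ge> m \<and> set ns \<subseteq> {0, -1} \<longrightarrow> iter md v ns \<in> M}"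

definition lsr01 :: "('v \<Rightarrow> int \<Rightarrow> 'v \<Rightarrow> 'v) \<Rightarrow> 'v set \<Rightarrow> 'v set" where
  "lsr01 md M = {v. \<forall>b. \<exists>m::nat. \<forall>s ns. s \<in> {0, -1} \<and> length ns \<ge> m \<and> set ns \<subseteq> {0, -1}
      \<longrightarrow> md b s (iter md v ns) \<in> M}"

definition rsr01 :: "('v \<Rightarrow> int \<Rightarrow> 'v \<Rightarrow> 'v) \<Rightarrow> 'v set \<Rightarrow> 'v set" where
  "rsr01 md M = {v. \<forall>w. \<exists>m::nat. \<forall>n ns. n \<in> {0, -1} \<and> length ns \<ge> m \<and> set ns \<subseteq> {0, -1}
      \<longrightarrow> md (iter md v ns) n w \<in> M}"

definition sr01 :: "('v \<Rightarrow> int \<Rightarrow> 'v \<Rightarrow> 'v) \<Rightarrow> 'v set \<Rightarrow> 'v set" where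
  "sr01 md M = lsr01 md M \<inter> rsr01 md M"

definition MZ01_subspace :: "('v \<Rightarrow> int \<Rightarrow> 'v \<Rightarrow> 'v) \<Rightarrow> 'v set \<Rightarrow> bool" where
  "MZ01_subspace md M \<longleftrightarrow> r01 md M = sr01 md M"

text \<open>The commutative algebra V/C_2(V) is handled through representatives:
a class a + C_2(V) has t-th power a_(-1) ... a_(-1) a + C_2(V) (t factors).\<close>
definition qpow :: "('v \<Rightarrow> int \<Rightarrow> 'v \<Rightarrow> 'v) \<Rightarrow> 'v \<Rightarrow> nat \<Rightarrow> 'v" where
  "qpow md a t = ((\<lambda>x. md a (-1) x) ^^ (t - 1)) a"

text \<open>Preimage in V of r(M/C_2(V)) (for M containing C_2(V)): classes a + C_2(V)
with (a + C_2(V))^t in M/C_2(V), i.e. a representative of the power lies in M.\<close>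
definition rquot :: "('v \<Rightarrow> int \<Rightarrow> 'v \<Rightarrow> 'v) \<Rightarrow> 'v set \<Rightarrow> 'v set" where
  "rquot md M = {a. \<exists>m::nat\<ge>1. \<forall>t\<ge>m. qpow md a t \<in> M}"

text \<open>A subset of V/C_2(V), given by its preimage I in V (a union of C_2-cosets),
is an ideal iff I is a subspace containing C_2(V) and closed under
multiplication by V, i.e. b_(-1) a in I for all b in V and a in I.\<close>
definition quot_ideal :: "(complex \<Rightarrow> 'v::ab_group_add \<Rightarrow> 'v) \<Rightarrow> ('v \<Rightarrow> int \<Rightarrow> 'v \<Rightarrow> 'v) \<Rightarrow> 'v set \<Rightarrow> bool" where
  "quot_ideal sc md I \<longleftrightarrow> module.subspace sc I \<and> C2 sc md \<subseteq> I \<and>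
     (\<forall>b a. a \<in> I \<longrightarrow> md b (-1) a \<in> I)"

end

theory Submission
  imports Defs "HOL-Analysis.Continuum_Not_Denumerable" "HOL-Computational_Algebra.Polynomial"
begin

text \<open>
  Modulo \<open>C\<^sub>2(V)\<close> the \<open>(-1)\<close>-product turns \<open>V\<close> into a commutative associative algebra
  \<open>A = V/C\<^sub>2(V)\<close> on which \<open>v\<^sub>0\<close> acts as a derivation killing \<open>v\<close>. Hence every iterated
  \<open>{0,-1}\<close>-product of \<open>v\<close> is either in \<open>C\<^sub>2(V)\<close> or a power of \<open>v\<close>, and r_{0,-1}(M),
  sr_{0,-1}(M) become the radical \<open>r(M) = {a. a\<^sup>t \<in> M for large t}\<close> and the strong radical
  \<open>sr(M) = {a. \<forall>b. b a\<^sup>t \<in> M for large t}\<close> of the finite-dimensional subspace \<open>M/C\<^sub>2(V)\<close>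
  of \<open>A\<close>.

  If \<open>r(M)\<close> is an ideal and \<open>a \<in> r(M)\<close>, then every \<open>a + \<lambda> b a\<close> lies in \<open>r(M)\<close>, so
  uncountably many \<open>\<lambda>\<close> share a threshold \<open>T\<close>; as \<open>(a + \<lambda> b a)\<^sup>t = a\<^sup>t (1 + \<lambda> b)\<^sup>t\<close> is
  polynomial in \<open>\<lambda>\<close>, its linear coefficient \<open>t b a\<^sup>t\<close> lies in \<open>M\<close> for \<open>t \<ge> T\<close>.
  Conversely, finite dimensionality of \<open>M/C\<^sub>2(V)\<close> gives \<open>a\<^sup>K = a\<^sup>K\<^sup>+\<^sup>1 \<rho>\<close> for
  \<open>a \<in> r(M)\<close>, and then, for \<open>a \<in> sr(M)\<close>, a threshold that is uniform in \<open>b\<close>. With it,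
  \<open>r(M) = sr(M)\<close> is closed under multiplication by \<open>A\<close> and, by the binomial expansion,
  under sums.
\<close>

context vector_space
begin

lemma dim_le_dim_of_subset_finite_span:
  assumes "A \<subseteq> T" "T \<subseteq> span G" "finite G"
  shows "dim A \<le> dim T"
proof -
  obtain B where B: "B \<subseteq> T" "independent B" "T \<subseteq> span B" "card B = dim T"
    using basis_exists by blast
  have "finite B"
    using independent_span_bound[OF assms(3) B(2)] B(1) assms(2) by blast
  then show ?thesis
    using dim_le_card[of A B] assms(1) B(3,4) by auto
qed

lemma subset_subspace_of_dim_le:
  assumes "subspace S" "S \<subseteq> T" "T \<subseteq> span G" "finite G" "dim T \<le> dim S"
  shows "T \<subseteq> S"
proof
  fix x assume "x \<in> T"
  show "x \<in> S"
  proof (rule ccontr)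
    assume "x \<notin> S"
    obtain B where B: "B \<subseteq> S" "independent B" "S \<subseteq> span B" "card B = dim S"
      using basis_exists by blast
    have "x \<notin> span B"
      using \<open>x \<notin> S\<close> span_minimal[OF B(1) assms(1)] by blast
    then have indep: "independent (insert x B)" and "x \<notin> B"
      using independent_insertI[OF _ B(2)] span_base by blast+
    have "card (insert x B) \<le> dim T"
      using dim_le_dim_of_subset_finite_span[of "insert x B" T G] \<open>x \<in> T\<close> B(1) assms
      by (simp add: dim_eq_card_independent[OF indep])
    moreover have "finite B"
      using independent_span_bound[OF assms(4) B(2)] B(1) assms(2,3) by blast
    ultimately show False
      using \<open>x \<notin> B\<close> B(4) assms(5) by simp
  qed
qed

lemma span_bound_of_linear_inj_on:
  assumes "Vector_Spaces.linear scale scale h" "subspace S"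
    and "\<And>x. x \<in> S \<Longrightarrow> h x = 0 \<Longrightarrow> x = 0" "h ` S \<subseteq> span G" "finite G"
  shows "\<exists>B. finite B \<and> S \<subseteq> span B \<and> card B \<le> card G"
proof -
  interpret vector_space_pair scale scale by unfold_locales
  obtain B where B: "B \<subseteq> S" "independent B" "S \<subseteq> span B"
    using maximal_independent_subset by blast
  have "span B \<subseteq> S" using span_minimal[OF B(1) assms(2)] .
  then have inj: "inj_on h (span B)"
    using linear_inj_on_iff_eq_0[OF assms(1) subspace_span] assms(3) by blast
  then have "independent (h ` B)"
    using linear_independent_injective_image[OF assms(1) B(2)] by blast
  moreover have "h ` B \<subseteq> span G" using assms(4) B(1) by blast
  ultimately have "finite (h ` B)" "card (h ` B) \<le> card G"
    using independent_span_bound[OF assms(5)] by blast+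
  moreover have "inj_on h B" using inj span_superset inj_on_subset by blast
  ultimately have "finite B" "card B \<le> card G"
    using finite_imageD card_image by metis+
  then show ?thesis using B(3) by blast
qed

lemma increasing_subspace_chain_stabilises:
  fixes P :: "nat \<Rightarrow> 'b set"
  assumes "\<And>t. subspace (P t)" "mono P"
    and "\<And>t. \<exists>G. finite G \<and> P t \<subseteq> span G \<and> card G \<le> d"
  shows "\<exists>T. \<forall>t\<ge>T. P t \<subseteq> P T"
proof -
  have "dim (P t) \<le> d" for t
    using assms(3)[of t] dim_le_card order.trans by blast
  then have "range (\<lambda>t. dim (P t)) \<subseteq> {..d}" by auto
  then have fin: "finite (range (\<lambda>t. dim (P t)))"
    using finite_subset by blast
  have "Max (range (\<lambda>t. dim (P t))) \<in> range (\<lambda>t. dim (P t))"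
    using Max_in[OF fin] by blast
  then obtain T where T: "dim (P T) = Max (range (\<lambda>t. dim (P t)))"
    by (metis rangeE)
  have "P t \<subseteq> P T" if "t \<ge> T" for t
  proof -
    obtain G where "finite G" "P t \<subseteq> span G" using assms(3) by blast
    moreover have "dim (P t) \<le> dim (P T)" using T Max_ge[OF fin] by simp
    ultimately show ?thesis
      using subset_subspace_of_dim_le assms(1) monoD[OF assms(2) that] by blast
  qed
  then show ?thesis by blast
qed

lemma decreasing_subspace_chain_stabilises:
  fixes P :: "nat \<Rightarrow> 'b set"
  assumes "\<And>t. subspace (P t)" "antimono P" "P 0 \<subseteq> span G" "finite G"
  shows "\<exists>T. \<forall>t\<ge>T. P T \<subseteq> P t"
proof -
  have "\<exists>t. dim (P t) = (LEAST n. \<exists>t. dim (P t) = n)"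
    by (rule LeastI_ex) blast
  then obtain T where T: "dim (P T) = (LEAST n. \<exists>t. dim (P t) = n)" ..
  have "P T \<subseteq> P t" if "t \<ge> T" for t
  proof (rule subset_subspace_of_dim_le[OF assms(1) antimonoD[OF assms(2) that] _ assms(4)])
    show "P T \<subseteq> span G" using antimonoD[OF assms(2), of 0 T] assms(3) by auto
    show "dim (P T) \<le> dim (P t)" unfolding T by (rule Least_le) blast
  qed
  then show ?thesis by blast
qed

lemma linear_projection_with_kernel:
  assumes "subspace C"
  obtains \<pi> where "Vector_Spaces.linear scale scale \<pi>" "\<And>x. \<pi> x = 0 \<longleftrightarrow> x \<in> C"
    "\<And>x. \<pi> (\<pi> x) = \<pi> x"
proof -
  interpret vector_space_pair scale scale by unfold_locales
  obtain B0 where B0: "B0 \<subseteq> C" "independent B0" "C \<subseteq> span B0"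
    using maximal_independent_subset by blast
  have span_B0: "span B0 = C"
    using B0 span_minimal[OF B0(1) assms] by auto
  define B where "B = extend_basis B0"
  have B: "B0 \<subseteq> B" "independent B" "span B = UNIV"
    using B0(2) extend_basis_superset independent_extend_basis span_extend_basis B_def by auto
  obtain g where g: "Vector_Spaces.linear scale scale g" "\<forall>x\<in>B. g x = (if x \<in> B0 then 0 else x)"
    using linear_independent_extend[OF B(2), of "\<lambda>x. if x \<in> B0 then 0 else x"] by blast
  have g_B0: "g y = 0" if "y \<in> span B0" for y
    using linear_eq_on[OF g(1) linear_zero that] g(2) B(1) by (simp add: subset_iff)
  have g_rest: "g z = z" if "z \<in> span (B - B0)" for z
    using linear_eq_on[OF g(1) linear_ident that] g(2) by simp
  have decompose: "\<exists>y z. y \<in> span B0 \<and> z \<in> span (B - B0) \<and> x = y + z" for x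
  proof -
    have "x \<in> span (B0 \<union> (B - B0))" using B by (simp add: Un_absorb1)
    then show ?thesis unfolding span_Un by blast
  qed
  show ?thesis
  proof
    show "Vector_Spaces.linear scale scale g" by fact
  next
    fix x
    obtain y z where yz: "y \<in> span B0" "z \<in> span (B - B0)" "x = y + z"
      using decompose by blast
    have gx: "g x = z"
      using yz g_B0 g_rest linear_add[OF g(1)] by simp
    show "g (g x) = g x" using gx g_rest yz by simp
    show "g x = 0 \<longleftrightarrow> x \<in> C"
      using gx yz span_B0 g_B0 by auto
  qed
qed

lemma separating_functional:
  assumes "subspace M" "x \<notin> M"
  obtains f where "Vector_Spaces.linear scale (*) f" "\<And>y. y \<in> M \<Longrightarrow> f y = 0" "f x \<noteq> 0"
proof -
  interpret vector_space_pair scale "(*) :: 'a \<Rightarrow> 'a \<Rightarrow> 'a"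
    by unfold_locales (auto simp: algebra_simps)
  obtain B where B: "B \<subseteq> M" "independent B" "M \<subseteq> span B"
    using maximal_independent_subset by blast
  have "x \<notin> span B" using assms span_minimal[OF B(1) assms(1)] by blast
  then have "independent (insert x B)" "x \<notin> B"
    using independent_insertI B(2) span_base by blast+
  then obtain f where f: "Vector_Spaces.linear scale (*) f"
      "\<forall>v\<in>insert x B. f v = (if v = x then 1 else 0)"
    using linear_independent_extend[of "insert x B" "\<lambda>v. if v = x then 1 else 0"] by blast
  have "f y = 0" if "y \<in> M" for y
  proof -
    have "\<And>b. b \<in> B \<Longrightarrow> f b = 0" using f(2) \<open>x \<notin> B\<close> by auto
    then show ?thesis using linear_eq_on[OF f(1) linear_zero, of y B] that B(3) by auto
  qed
  then show ?thesis using that f by simp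
qed

lemma scale_eq_of_add_scale_eq_0:
  assumes "x + scale c y = 0" "c \<noteq> 0"
  shows "y = scale (- 1 / c) x"
proof -
  have "x = - scale c y" using assms(1) by (simp add: eq_neg_iff_add_eq_0)
  then show ?thesis using assms(2) by (simp add: scale_minus_right)
qed

end

lemma infinite_member_of_uncountable_UNION:
  fixes A :: "nat \<Rightarrow> 'a set"
  assumes "uncountable (\<Union>t. A t)"
  shows "\<exists>t. infinite (A t)"
proof (rule ccontr)
  assume "\<not> (\<exists>t. infinite (A t))"
  then have "countable (\<Union>t. A t)"
    using countable_finite by (intro countable_UN) auto
  with assms show False by blast
qed

lemma sum_atLeast0_atMost_eq_first:
  fixes g :: "nat \<Rightarrow> 'a::comm_monoid_add"
  assumes "\<And>i. i \<ge> 1 \<Longrightarrow> g i = 0"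
  shows "sum g {0..N} = g 0"
proof -
  have "sum g {0..N} = sum g {0}"
    by (rule sum.mono_neutral_right) (use assms in auto)
  then show ?thesis by simp
qed

lemma sum_atLeast0_atMost_eq_first_two:
  fixes g :: "nat \<Rightarrow> 'a::comm_monoid_add"
  assumes "N \<ge> 1" "\<And>i. i \<ge> 2 \<Longrightarrow> g i = 0"
  shows "sum g {0..N} = g 0 + g 1"
proof -
  have "sum g {0..N} = sum g {0..<2}"
    by (rule sum.mono_neutral_right) (use assms in auto)
  then show ?thesis by (simp add: numeral_2_eq_2)
qed

locale comm_algebra_mod = vector_space sc for sc :: "complex \<Rightarrow> 'v::ab_group_add \<Rightarrow> 'v" +
  fixes C :: "'v set" and mul :: "'v \<Rightarrow> 'v \<Rightarrow> 'v" and one :: 'v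
  assumes subspace_C: "subspace C"
    and mul_add_left: "mul (x + y) z = mul x z + mul y z"
    and mul_add_right: "mul x (y + z) = mul x y + mul x z"
    and mul_scale_left: "mul (sc a x) y = sc a (mul x y)"
    and mul_scale_right: "mul x (sc a y) = sc a (mul x y)"
    and mul_C_right: "w \<in> C \<Longrightarrow> mul x w \<in> C"
    and mul_commute_mod_C: "mul x y - mul y x \<in> C"
    and mul_assoc_mod_C: "mul (mul x y) z - mul y (mul x z) \<in> C"
    and mul_one_left: "mul one x = x"
    and mul_one_right: "mul x one = x"
begin

sublocale pair: vector_space_pair sc sc by unfold_locales

lemma mul_zero_left [simp]: "mul 0 x = 0"
  by (metis add_cancel_right_right mul_add_left)

lemma mul_zero_right [simp]: "mul x 0 = 0"
  by (metis add_cancel_right_right mul_add_right)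

lemma mul_diff_left: "mul (x - y) z = mul x z - mul y z"
  by (metis add_diff_cancel_right' diff_add_cancel mul_add_left)

lemma mul_diff_right: "mul z (x - y) = mul z x - mul z y"
  by (metis add_diff_cancel_right' diff_add_cancel mul_add_right)

lemma mul_C_left: "c \<in> C \<Longrightarrow> mul c x \<in> C"
  using mul_C_right[of c x] mul_commute_mod_C[of c x] subspace_C subspace_add by fastforce

text \<open>\<open>V/C\<close> is modelled inside \<open>V\<close> as the image of a linear projection with kernel \<open>C\<close>.
  On these representatives \<open>qmul\<close> below is commutative and associative on the nose, so
  computations in \<open>V/C\<close> become equational reasoning with \<open>qmul_ac\<close>.\<close>

definition proj :: "'v \<Rightarrow> 'v" where
  "proj = (SOME \<pi>. Vector_Spaces.linear sc sc \<pi> \<and> (\<forall>x. \<pi> x = 0 \<longleftrightarrow> x \<in> C) \<and> (\<forall>x. \<pi> (\<pi> x) = \<pi> x))"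

lemma proj: "Vector_Spaces.linear sc sc proj" "proj x = 0 \<longleftrightarrow> x \<in> C" "proj (proj x) = proj x"
proof -
  have "\<exists>\<pi>. Vector_Spaces.linear sc sc \<pi> \<and> (\<forall>x. \<pi> x = 0 \<longleftrightarrow> x \<in> C) \<and> (\<forall>x. \<pi> (\<pi> x) = \<pi> x)"
    using linear_projection_with_kernel[OF subspace_C] by metis
  from someI_ex[OF this] show "Vector_Spaces.linear sc sc proj" "proj x = 0 \<longleftrightarrow> x \<in> C"
    "proj (proj x) = proj x"
    unfolding proj_def by auto
qed

interpretation proj: Vector_Spaces.linear sc sc proj by (rule proj(1))

lemmas proj_add [simp] = proj.add
  and proj_diff [simp] = proj.diff
  and proj_scale [simp] = proj.scale
  and proj_zero [simp] = proj.zero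
  and linear_proj = proj(1)
  and proj_eq_0_iff = proj(2)
  and proj_idem [simp] = proj(3)

lemma proj_eq_iff: "proj x = proj y \<longleftrightarrow> x - y \<in> C"
  using proj_eq_0_iff[of "x - y"] by auto

lemma diff_proj_in_C: "x - proj x \<in> C"
  using proj_eq_iff[of x "proj x"] by simp

lemma proj_in_iff:
  assumes "subspace M" "C \<subseteq> M"
  shows "proj x \<in> M \<longleftrightarrow> x \<in> M"
  using diff_proj_in_C[of x] assms subspace_add subspace_diff
  by (metis add_diff_cancel_left' diff_add_cancel subsetD)

definition qmul :: "'v \<Rightarrow> 'v \<Rightarrow> 'v" where
  "qmul x y = proj (mul x y)"

lemma qmul_proj_left [simp]: "qmul (proj x) y = qmul x y"
proof -
  have "mul (proj x) y - mul x y \<in> C"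
    using mul_C_left[OF diff_proj_in_C[of x]] subspace_C subspace_neg
    by (metis minus_diff_eq mul_diff_left)
  then show ?thesis unfolding qmul_def proj_eq_iff .
qed

lemma qmul_proj_right [simp]: "qmul x (proj y) = qmul x y"
proof -
  have "mul x (proj y) - mul x y \<in> C"
    using mul_C_right[OF diff_proj_in_C[of y]] subspace_C subspace_neg
    by (metis minus_diff_eq mul_diff_right)
  then show ?thesis unfolding qmul_def proj_eq_iff .
qed

lemma qmul_commute: "qmul x y = qmul y x"
  unfolding qmul_def proj_eq_iff by (rule mul_commute_mod_C)

lemma qmul_assoc: "qmul (qmul x y) z = qmul x (qmul y z)"
proof -
  have "qmul (qmul x y) z = qmul (qmul y x) z" by (simp add: qmul_commute)
  also have "\<dots> = proj (mul (mul y x) z)" by (metis qmul_def qmul_proj_left)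
  also have "\<dots> = proj (mul x (mul y z))" using mul_assoc_mod_C proj_eq_iff by blast
  also have "\<dots> = qmul x (qmul y z)" by (metis qmul_def qmul_proj_right)
  finally show ?thesis .
qed

lemma qmul_left_commute: "qmul x (qmul y z) = qmul y (qmul x z)"
  by (metis qmul_assoc qmul_commute)

lemmas qmul_ac = qmul_assoc qmul_commute qmul_left_commute

lemma qmul_add_left [simp]: "qmul (x + y) z = qmul x z + qmul y z"
  by (simp add: qmul_def mul_add_left)

lemma qmul_add_right [simp]: "qmul z (x + y) = qmul z x + qmul z y"
  by (simp add: qmul_def mul_add_right)

lemma qmul_scale_left [simp]: "qmul (sc c x) y = sc c (qmul x y)"
  by (simp add: qmul_def mul_scale_left)

lemma qmul_scale_right [simp]: "qmul x (sc c y) = sc c (qmul x y)"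
  by (simp add: qmul_def mul_scale_right)

lemma qmul_one_left [simp]: "qmul one x = proj x"
  by (simp add: qmul_def mul_one_left)

lemma qmul_one_right [simp]: "qmul x one = proj x"
  by (simp add: qmul_def mul_one_right)

lemma qmul_zero_left [simp]: "qmul 0 x = 0"
  by (simp add: qmul_def)

lemma qmul_zero_right [simp]: "qmul x 0 = 0"
  by (simp add: qmul_def)

lemma linear_qmul_left: "Vector_Spaces.linear sc sc (\<lambda>y. qmul y x)"
  by (simp add: Vector_Spaces.linear_iff vector_space_axioms)

lemma linear_qmul_right: "Vector_Spaces.linear sc sc (qmul x)"
  by (simp add: Vector_Spaces.linear_iff vector_space_axioms)

definition mpow :: "'v \<Rightarrow> nat \<Rightarrow> 'v" where
  "mpow x t = (mul x ^^ t) one"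

lemma mpow_0 [simp]: "mpow x 0 = one"
  by (simp add: mpow_def)

lemma mpow_Suc: "mpow x (Suc t) = mul x (mpow x t)"
  by (simp add: mpow_def)

lemma proj_mpow_Suc: "proj (mpow x (Suc t)) = qmul x (mpow x t)"
  by (simp add: mpow_Suc qmul_def)

lemma proj_mpow_add: "proj (mpow x (s + t)) = qmul (mpow x s) (mpow x t)"
proof (induction s)
  case (Suc s)
  have "proj (mpow x (Suc s + t)) = qmul x (proj (mpow x (s + t)))"
    by (simp add: proj_mpow_Suc)
  also have "\<dots> = qmul (qmul x (mpow x s)) (mpow x t)"
    using Suc by (simp add: qmul_ac)
  finally show ?case by (metis qmul_proj_left proj_mpow_Suc)
qed simp

lemma qmul_mpow_add: "qmul x (mpow a (s + t)) = qmul (qmul x (mpow a s)) (mpow a t)"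
  by (metis proj_mpow_add qmul_assoc qmul_proj_right)

lemma proj_mpow_mul: "proj (mpow (mul x y) t) = qmul (mpow x t) (mpow y t)"
proof (induction t)
  case (Suc t)
  have "proj (mpow (mul x y) (Suc t)) = qmul (qmul x y) (qmul (mpow x t) (mpow y t))"
    using Suc by (metis proj_mpow_Suc qmul_def qmul_proj_left qmul_proj_right)
  also have "\<dots> = qmul (qmul x (mpow x t)) (qmul y (mpow y t))"
    by (simp add: qmul_ac)
  finally show ?case by (metis qmul_proj_left qmul_proj_right proj_mpow_Suc)
qed (simp add: mul_one_left)

lemma proj_mpow_cong: "proj x = proj y \<Longrightarrow> proj (mpow x t) = proj (mpow y t)"
  by (induction t) (simp_all, metis qmul_proj_left qmul_proj_right proj_mpow_Suc)

lemma proj_mpow_scale: "proj (mpow (sc c x) t) = sc (c ^ t) (proj (mpow x t))"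
proof (induction t)
  case (Suc t)
  have "proj (mpow (sc c x) (Suc t)) = sc c (qmul x (proj (mpow (sc c x) t)))"
    by (simp add: proj_mpow_Suc)
  also have "\<dots> = sc (c ^ Suc t) (proj (mpow x (Suc t)))"
    using Suc by (simp add: proj_mpow_Suc)
  finally show ?case .
qed simp

lemma mpow_in_C: "c \<in> C \<Longrightarrow> t \<ge> 1 \<Longrightarrow> mpow c t \<in> C"
  by (cases t) (auto simp: mpow_Suc mul_C_left)

definition rad :: "'v set \<Rightarrow> 'v set" where
  "rad M = {a. \<exists>k. \<forall>t\<ge>k. mpow a t \<in> M}"

definition srad :: "'v set \<Rightarrow> 'v set" where
  "srad M = {a. \<forall>b. \<exists>k. \<forall>t\<ge>k. mul b (mpow a t) \<in> M}"

lemma srad_subset_rad: "srad M \<subseteq> rad M"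
proof
  fix a assume "a \<in> srad M"
  then obtain k where "\<forall>t\<ge>k. mul one (mpow a t) \<in> M" unfolding srad_def by blast
  then show "a \<in> rad M" unfolding rad_def by (auto simp: mul_one_left)
qed

lemma mul_span_mpow:
  assumes "p \<in> span (range (mpow a))"
  shows "mul a p \<in> span (range (mpow a))"
  using assms
proof (induction rule: span_induct_alt)
  case (step c x y)
  then obtain j where "x = mpow a j" by blast
  then have "mul a x \<in> span (range (mpow a))"
    by (metis mpow_Suc rangeI span_base)
  then show ?case
    using step by (simp add: mul_add_right mul_scale_right span_add span_scale)
qed (simp add: span_zero)

lemma power_eq_mul_power_iterate:
  assumes "proj (mpow a K) = qmul (mpow a (Suc K)) \<rho>"
  shows "proj (mpow a K) = qmul (mpow a (K + j)) (mpow \<rho> j)"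
proof (induction j)
  case (Suc j)
  have "qmul (mpow a (K + Suc j)) (mpow \<rho> (Suc j))
      = qmul (qmul (mpow a (Suc K)) (mpow a j)) (qmul \<rho> (mpow \<rho> j))"
    by (metis add_Suc_shift proj_mpow_Suc proj_mpow_add qmul_proj_left qmul_proj_right)
  also have "\<dots> = qmul (qmul (qmul (mpow a (Suc K)) \<rho>) (mpow a j)) (mpow \<rho> j)"
    by (simp add: qmul_ac)
  also have "\<dots> = qmul (mpow a (K + j)) (mpow \<rho> j)"
    by (metis assms proj_mpow_add qmul_proj_left)
  finally show ?case using Suc by simp
qed simp

lemma mul_power_cancel:
  assumes "proj (mpow a K) = qmul (mpow a (Suc K)) \<rho>"
    and "qmul (qmul (mpow a K) x) (mpow a t) = 0"
  shows "qmul (mpow a K) x = 0"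
proof -
  have "qmul (mpow a K) x = qmul (qmul (mpow a (K + t)) (mpow \<rho> t)) x"
    by (metis assms(1) power_eq_mul_power_iterate qmul_proj_left)
  also have "\<dots> = qmul (qmul (qmul (mpow a K) x) (mpow a t)) (mpow \<rho> t)"
    by (metis proj_mpow_add qmul_ac qmul_proj_left)
  finally show ?thesis using assms(2) by simp
qed

definition mixed_powers :: "'v \<Rightarrow> 'v \<Rightarrow> nat \<Rightarrow> 'v set" where
  "mixed_powers x y n = {mul (mpow x i) (mpow y j) | i j. i + j = n}"

lemma qmul_add_span_mixed_powers:
  assumes "z \<in> span (mixed_powers x y n)"
  shows "\<exists>z' \<in> span (mixed_powers x y (Suc n)). qmul (x + y) z = proj z'"
  using assms
proof (induction rule: span_induct_alt)
  case (step c g w)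
  then obtain w' where w': "w' \<in> span (mixed_powers x y (Suc n))" "qmul (x + y) w = proj w'"
    by blast
  from step obtain i j where ij: "i + j = n" "g = mul (mpow x i) (mpow y j)"
    unfolding mixed_powers_def by blast
  define g1 where "g1 = mul (mpow x (Suc i)) (mpow y j)"
  define g2 where "g2 = mul (mpow x i) (mpow y (Suc j))"
  have "g1 \<in> mixed_powers x y (Suc n)" "g2 \<in> mixed_powers x y (Suc n)"
    unfolding mixed_powers_def g1_def g2_def using ij by force+
  then have "sc c (g1 + g2) + w' \<in> span (mixed_powers x y (Suc n))"
    using w'(1) by (simp add: span_add span_scale span_base)
  moreover have "qmul x g = proj g1" "qmul y g = proj g2"
    unfolding ij(2) g1_def g2_def
    by (metis proj_mpow_Suc qmul_ac qmul_def qmul_proj_left qmul_proj_right)+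
  then have "qmul (x + y) (sc c g + w) = proj (sc c (g1 + g2) + w')"
    using w'(2) by simp
  ultimately show ?case by blast
qed (use span_zero in force)

lemma proj_mpow_add_in_span_mixed_powers:
  "\<exists>z \<in> span (mixed_powers x y n). proj (mpow (x + y) n) = proj z"
proof (induction n)
  case 0
  have "one \<in> mixed_powers x y 0"
    unfolding mixed_powers_def using mul_one_left by force
  then show ?case by (auto intro: span_base)
next
  case (Suc n)
  then obtain z where "z \<in> span (mixed_powers x y n)" "proj (mpow (x + y) n) = proj z"
    by blast
  moreover have "proj (mpow (x + y) (Suc n)) = qmul (x + y) (proj (mpow (x + y) n))"
    by (simp add: proj_mpow_Suc)
  ultimately show ?case
    using qmul_add_span_mixed_powers by (metis qmul_proj_right)
qed

primrec line_poly :: "('v \<Rightarrow> complex) \<Rightarrow> 'v \<Rightarrow> nat \<Rightarrow> 'v \<Rightarrow> complex poly" where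
  "line_poly f b 0 x = [:f x:]"
| "line_poly f b (Suc t) x = line_poly f b t x + pCons 0 (line_poly f b t (mul x b))"

lemma coeff_line_poly:
  "coeff (line_poly f b t x) 0 = f x" "coeff (line_poly f b t x) 1 = of_nat t * f (mul x b)"
  by (induction t arbitrary: x) (simp_all add: algebra_simps)

lemma functional_proj:
  assumes "Vector_Spaces.linear sc (*) f" "\<And>c. c \<in> C \<Longrightarrow> f c = 0"
  shows "f (proj z) = f z"
proof -
  interpret f: Vector_Spaces.linear sc "(*)" f by fact
  show ?thesis using assms(2)[OF diff_proj_in_C[of z]] f.diff by simp
qed

lemma poly_line_poly:
  assumes "Vector_Spaces.linear sc (*) f" "\<And>c. c \<in> C \<Longrightarrow> f c = 0"
  shows "poly (line_poly f b t x) l = f (mul x (mpow (one + sc l b) t))"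
proof (induction t arbitrary: x)
  case 0
  then show ?case by (simp add: mul_one_right)
next
  case (Suc t)
  interpret f: Vector_Spaces.linear sc "(*)" f by fact
  let ?y = "one + sc l b"
  have "proj (mul x (mpow ?y (Suc t))) = qmul (qmul x ?y) (mpow ?y t)"
    by (metis proj_mpow_Suc qmul_assoc qmul_def qmul_proj_right)
  also have "qmul x ?y = proj (x + sc l (mul x b))"
    by (simp add: qmul_def mul_add_right mul_scale_right mul_one_right)
  also have "qmul (proj (x + sc l (mul x b))) (mpow ?y t)
      = qmul x (mpow ?y t) + sc l (qmul (mul x b) (mpow ?y t))"
    by simp
  finally have "f (mul x (mpow ?y (Suc t)))
      = f (mul x (mpow ?y t)) + l * f (mul (mul x b) (mpow ?y t))"
    by (metis f.add f.scale functional_proj[OF assms] qmul_def)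
  then show ?case using Suc by simp
qed

context
  fixes M
  assumes subspace_M: "subspace M" and C_subset_M: "C \<subseteq> M"
begin

lemma proj_in_M_iff: "proj x \<in> M \<longleftrightarrow> x \<in> M"
  using proj_in_iff[OF subspace_M C_subset_M] .

lemma mul_mpow_span_in_M:
  assumes "\<And>t. t \<ge> k \<Longrightarrow> mpow a t \<in> M" "n \<ge> k" "p \<in> span (range (mpow a))"
  shows "mul (mpow a n) p \<in> M"
  using assms(3)
proof (induction rule: span_induct_alt)
  case (step c x y)
  then obtain j where "x = mpow a j" by blast
  then have "proj (mul (mpow a n) x) = proj (mpow a (n + j))"
    by (simp add: proj_mpow_add qmul_def)
  then have "mul (mpow a n) x \<in> M"
    using assms(1,2) proj_in_M_iff by (metis le_add1 order_trans)
  then show ?case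
    using step subspace_M by (simp add: mul_add_right mul_scale_right subspace_add subspace_scale)
qed (simp add: subspace_0[OF subspace_M])

lemma C_subset_rad: "C \<subseteq> rad M"
  unfolding rad_def using mpow_in_C C_subset_M by blast

lemma zero_in_rad: "0 \<in> rad M"
proof -
  have "mpow 0 t \<in> M" if "t \<ge> 1" for t
    using that subspace_0[OF subspace_M] by (cases t) (auto simp: mpow_Suc)
  then show ?thesis unfolding rad_def by blast
qed

lemma scale_in_rad:
  assumes "x \<in> rad M"
  shows "sc c x \<in> rad M"
proof -
  obtain k where k: "\<And>t. t \<ge> k \<Longrightarrow> mpow x t \<in> M"
    using assms unfolding rad_def by blast
  have "mpow (sc c x) t \<in> M" if "t \<ge> k" for t
    using k[OF that] proj_mpow_scale[of c x t] proj_in_M_iff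
      subspace_scale[OF subspace_M] by metis
  then show ?thesis unfolding rad_def by blast
qed

lemma mul_in_rad_of_uniform:
  assumes "\<And>t b. t \<ge> T \<Longrightarrow> mul b (mpow a t) \<in> M"
  shows "mul b a \<in> rad M"
proof -
  have "mpow (mul b a) t \<in> M" if "t \<ge> T" for t
    using assms[OF that] proj_mpow_mul[of b a t] proj_in_M_iff
    by (metis qmul_def)
  then show ?thesis unfolding rad_def by blast
qed

lemma add_in_rad_of_uniform:
  assumes x: "\<And>t b. t \<ge> Tx \<Longrightarrow> mul b (mpow x t) \<in> M"
    and y: "\<And>t b. t \<ge> Ty \<Longrightarrow> mul b (mpow y t) \<in> M"
  shows "x + y \<in> rad M"
proof -
  have "mixed_powers x y n \<subseteq> M" if n: "n \<ge> Tx + Ty" for n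
  proof
    fix g assume "g \<in> mixed_powers x y n"
    then obtain i j where ij: "i + j = n" "g = mul (mpow x i) (mpow y j)"
      unfolding mixed_powers_def by blast
    show "g \<in> M"
    proof (cases "i \<ge> Tx")
      case True
      have "proj g = proj (mul (mpow y j) (mpow x i))"
        using ij(2) qmul_commute by (metis qmul_def)
      then show ?thesis using x[OF True] proj_in_M_iff by metis
    next
      case False
      then show ?thesis using y ij n by simp
    qed
  qed
  then have "mpow (x + y) n \<in> M" if "n \<ge> Tx + Ty" for n
    using that proj_mpow_add_in_span_mixed_powers[of x y n] span_minimal[OF _ subspace_M]
      proj_in_M_iff by (metis subsetD)
  then show ?thesis unfolding rad_def by blast
qed

lemma mul_mpow_in_of_infinite_line:
  assumes "infinite L" "\<And>l. l \<in> L \<Longrightarrow> mpow (a + sc l (mul b a)) t \<in> M" "t \<ge> 1"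
  shows "mul b (mpow a t) \<in> M"
proof (rule ccontr)
  assume "mul b (mpow a t) \<notin> M"
  then obtain f where f: "Vector_Spaces.linear sc (*) f" "\<And>z. z \<in> M \<Longrightarrow> f z = 0"
    "f (mul b (mpow a t)) \<noteq> 0"
    using separating_functional[OF subspace_M] by blast
  have f_proj: "f (proj z) = f z" for z
    using functional_proj[OF f(1)] f(2) C_subset_M by blast
  define p where "p = line_poly f b t (mpow a t)"
  have "poly p l = 0" if "l \<in> L" for l
  proof -
    have "proj (mul a (one + sc l b)) = proj (a + sc l (mul b a))"
      using qmul_commute[of a b] by (simp add: qmul_def mul_add_right mul_scale_right mul_one_right)
    then have "proj (mul (mpow a t) (mpow (one + sc l b) t)) = proj (mpow (a + sc l (mul b a)) t)"
      by (metis proj_mpow_cong proj_mpow_mul qmul_def)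
    moreover have "poly p l = f (mul (mpow a t) (mpow (one + sc l b) t))"
      unfolding p_def using poly_line_poly[OF f(1)] f(2) C_subset_M by blast
    ultimately show ?thesis
      using assms(2)[OF that] f(2) f_proj by metis
  qed
  then have "L \<subseteq> {l. poly p l = 0}" by blast
  then have "p = 0"
    using assms(1) poly_roots_finite[of p] finite_subset by blast
  then have "f (mul (mpow a t) b) = 0"
    using coeff_line_poly(2)[of f b t "mpow a t"] assms(3) unfolding p_def by simp
  moreover have "f (mul (mpow a t) b) = f (mul b (mpow a t))"
    by (metis f_proj qmul_commute qmul_def)
  ultimately show False using f(3) by simp
qed

lemma rad_subset_srad_of_ideal:
  assumes "subspace (rad M)" "\<And>a b. a \<in> rad M \<Longrightarrow> mul b a \<in> rad M"
  shows "rad M \<subseteq> srad M"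
proof
  fix a assume "a \<in> rad M"
  show "a \<in> srad M" unfolding srad_def
  proof (intro CollectI allI)
    fix b
    define L where "L T = {l. \<forall>s\<ge>T. mpow (a + sc l (mul b a)) s \<in> M}" for T
    have "a + sc l (mul b a) \<in> rad M" for l
      using assms \<open>a \<in> rad M\<close> by (simp add: subspace_add subspace_scale)
    then have "(\<Union>T. L T) = UNIV" unfolding L_def rad_def by blast
    then obtain T where "infinite (L T)"
      using infinite_member_of_uncountable_UNION[of L] uncountable_UNIV_complex by auto
    then have "mul b (mpow a t) \<in> M" if "t \<ge> max T 1" for t
      using that mul_mpow_in_of_infinite_line[of "L T"] unfolding L_def by simp
    then show "\<exists>k. \<forall>t\<ge>k. mul b (mpow a t) \<in> M" by blast
  qed
qed

context
  fixes F
  assumes finite_F: "finite F" and M_subset_span: "M \<subseteq> span (C \<union> F)"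
begin

lemma proj_image_M_subset_span: "proj ` M \<subseteq> span (proj ` F)"
proof -
  have "proj ` M \<subseteq> span (proj ` (C \<union> F))"
    using M_subset_span pair.linear_span_image[OF linear_proj] by blast
  also have "\<dots> \<subseteq> span (insert 0 (proj ` F))"
    by (rule span_mono) (use proj_eq_0_iff in auto)
  finally show ?thesis by simp
qed

text \<open>The subspaces \<open>a\<^sup>k\<^sup>+\<^sup>t \<cdot> \<bbbC>[a]\<close> of the finite-dimensional \<open>M/C\<close> decrease
  with \<open>t\<close>; once they stabilise, \<open>a\<^sup>k\<^sup>+\<^sup>t\<close> is a multiple of \<open>a\<^sup>k\<^sup>+\<^sup>t\<^sup>+\<^sup>1\<close>.\<close>

lemma rad_power_eq_mul_next_power:
  assumes "a \<in> rad M"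
  obtains K \<rho> where "proj (mpow a K) = qmul (mpow a (Suc K)) \<rho>"
proof -
  obtain k where k: "\<And>t. t \<ge> k \<Longrightarrow> mpow a t \<in> M"
    using assms unfolding rad_def by blast
  define Z where "Z t = qmul (mpow a (k + t)) ` span (range (mpow a))" for t
  have "subspace (Z t)" for t
    unfolding Z_def by (rule pair.linear_subspace_image[OF linear_qmul_right subspace_span])
  moreover have "antimono Z"
  proof (unfold antimono_iff_le_Suc, intro allI subsetI)
    fix t y assume "y \<in> Z (Suc t)"
    then obtain p where p: "p \<in> span (range (mpow a))" "y = qmul (mpow a (k + Suc t)) p"
      unfolding Z_def by blast
    have "y = qmul (mpow a (k + t)) (mul a p)"
      using p(2) by (metis add_Suc_right proj_mpow_Suc qmul_ac qmul_def qmul_proj_left qmul_proj_right)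
    then show "y \<in> Z t" unfolding Z_def using mul_span_mpow[OF p(1)] by blast
  qed
  moreover have "Z 0 \<subseteq> span (proj ` F)"
    unfolding Z_def qmul_def using mul_mpow_span_in_M[OF k] proj_image_M_subset_span by auto
  ultimately obtain T where T: "\<And>t. t \<ge> T \<Longrightarrow> Z T \<subseteq> Z t"
    using decreasing_subspace_chain_stabilises finite_F by blast
  have "one \<in> span (range (mpow a))" by (metis mpow_0 rangeI span_base)
  then have "proj (mpow a (k + T)) \<in> Z (Suc T)"
    using T[of "Suc T"] unfolding Z_def by force
  then obtain \<rho> where "proj (mpow a (k + T)) = qmul (mpow a (Suc (k + T))) \<rho>"
    unfolding Z_def by auto
  then show ?thesis using that by blast
qed

lemma span_bound_of_power_multiples:
  assumes "proj (mpow a K) = qmul (mpow a (Suc K)) \<rho>" "subspace S"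
    and "\<And>x. x \<in> S \<Longrightarrow> mul x (mpow a (K + t)) \<in> M"
  shows "\<exists>G. finite G \<and> qmul (mpow a K) ` S \<subseteq> span G \<and> card G \<le> card (proj ` F)"
proof -
  have "subspace (qmul (mpow a K) ` S)"
    by (rule pair.linear_subspace_image[OF linear_qmul_right assms(2)])
  then show ?thesis
  proof (rule span_bound_of_linear_inj_on[OF linear_qmul_left[of "mpow a t"]])
    fix y assume "y \<in> qmul (mpow a K) ` S" "qmul y (mpow a t) = 0"
    then show "y = 0" using mul_power_cancel[OF assms(1)] by blast
  next
    show "(\<lambda>y. qmul y (mpow a t)) ` qmul (mpow a K) ` S \<subseteq> span (proj ` F)"
    proof clarify
      fix x assume "x \<in> S"
      have "qmul (qmul (mpow a K) x) (mpow a t) = proj (mul x (mpow a (K + t)))"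
        by (metis proj_mpow_add qmul_ac qmul_def qmul_proj_right)
      then show "qmul (qmul (mpow a K) x) (mpow a t) \<in> span (proj ` F)"
        using assms(3)[OF \<open>x \<in> S\<close>] proj_image_M_subset_span by auto
    qed
  qed (use finite_F in simp)
qed

text \<open>The subspaces \<open>S\<^sub>t = {x. \<forall>s \<ge> t. x a\<^sup>s \<in> M}\<close> increase to \<open>V\<close>; their images
  \<open>a\<^sup>K S\<^sub>t\<close> have bounded dimension, so they stabilise at some \<open>T\<^sub>0\<close>, and \<open>K + T\<^sub>0\<close> is a
  threshold that works for every \<open>b\<close>.\<close>

lemma srad_uniform:
  assumes "a \<in> srad M"
  obtains T where "\<And>t b. t \<ge> T \<Longrightarrow> mul b (mpow a t) \<in> M"
proof -
  obtain K \<rho> where \<rho>: "proj (mpow a K) = qmul (mpow a (Suc K)) \<rho>"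
    using rad_power_eq_mul_next_power assms srad_subset_rad by blast
  define S where "S t = {x. \<forall>s\<ge>t. mul x (mpow a s) \<in> M}" for t
  define E where "E t = qmul (mpow a K) ` S t" for t
  have S: "subspace (S t)" for t
    using subspace_M unfolding S_def subspace_def
    by (simp add: mul_add_left mul_scale_left)
  then have "subspace (E t)" for t
    unfolding E_def by (rule pair.linear_subspace_image[OF linear_qmul_right])
  moreover have "mono E"
    unfolding E_def S_def by (intro monoI image_mono) auto
  moreover have "\<exists>G. finite G \<and> E t \<subseteq> span G \<and> card G \<le> card (proj ` F)" for t
    unfolding E_def by (rule span_bound_of_power_multiples[OF \<rho> S, where t = t]) (simp add: S_def)
  ultimately obtain T0 where T0: "\<And>t. t \<ge> T0 \<Longrightarrow> E t \<subseteq> E T0"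
    using increasing_subspace_chain_stabilises by blast
  have "mul b (mpow a t) \<in> M" if tK: "t \<ge> K + T0" for t b
  proof -
    obtain k where "\<And>s. s \<ge> k \<Longrightarrow> mul b (mpow a s) \<in> M"
      using assms unfolding srad_def by blast
    then have "qmul (mpow a K) b \<in> E T0"
      using T0[of "max k T0"] unfolding E_def S_def by auto
    then obtain x where x: "x \<in> S T0" "qmul (mpow a K) b = qmul (mpow a K) x"
      unfolding E_def by blast
    obtain j where t: "t = K + j" using tK le_Suc_ex add_leD1 by blast
    have "proj (mul b (mpow a t)) = qmul (qmul (mpow a K) b) (mpow a j)"
      by (simp add: t qmul_mpow_add qmul_commute flip: qmul_def)
    also have "\<dots> = qmul (qmul (mpow a K) x) (mpow a j)"
      by (simp only: x(2))
    also have "\<dots> = proj (mul x (mpow a t))"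
      by (simp add: t qmul_mpow_add qmul_commute flip: qmul_def)
    finally have "proj (mul b (mpow a t)) = proj (mul x (mpow a t))" .
    moreover have "mul x (mpow a t) \<in> M"
      using x(1) tK unfolding S_def by simp
    ultimately show ?thesis
      by (metis proj_in_M_iff)
  qed
  then show ?thesis using that by blast
qed

lemma rad_eq_srad_iff_ideal:
  "rad M = srad M \<longleftrightarrow> subspace (rad M) \<and> (\<forall>a b. a \<in> rad M \<longrightarrow> mul b a \<in> rad M)"
proof
  assume eq: "rad M = srad M"
  have uniform: "\<exists>T. \<forall>t b. t \<ge> T \<longrightarrow> mul b (mpow a t) \<in> M" if "a \<in> rad M" for a
    using srad_uniform that eq by metis
  have "subspace (rad M)"
    unfolding subspace_def
    using zero_in_rad scale_in_rad add_in_rad_of_uniform uniform subspace_M C_subset_M by meson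
  moreover have "mul b a \<in> rad M" if "a \<in> rad M" for a b
    using mul_in_rad_of_uniform uniform[OF that] subspace_M C_subset_M by meson
  ultimately show "subspace (rad M) \<and> (\<forall>a b. a \<in> rad M \<longrightarrow> mul b a \<in> rad M)" by blast
next
  assume "subspace (rad M) \<and> (\<forall>a b. a \<in> rad M \<longrightarrow> mul b a \<in> rad M)"
  then show "rad M = srad M"
    using rad_subset_srad_of_ideal srad_subset_rad by blast
qed

end

end

end

context vertex_algebra
begin

abbreviation C\<^sub>2 :: "'v set" where
  "C\<^sub>2 \<equiv> C2 sc md"

lemma md_zero_left [simp]: "md 0 n v = 0"
  by (metis add_cancel_right_right md_add_left)

lemma md_zero_right [simp]: "md u n 0 = 0"
  by (metis add_cancel_right_right md_add_right)

lemma subspace_C2: "subspace C\<^sub>2"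
  unfolding C2_def by simp

lemma mode_minus_two_in_C2: "md u (-2) v \<in> C\<^sub>2"
  unfolding C2_def by (rule span_base) blast

lemma sum_diff_first_in_C2:
  fixes N :: nat
  assumes "\<And>i. i \<ge> 1 \<Longrightarrow> g i \<in> C\<^sub>2"
  shows "sum g {0..N} - g 0 \<in> C\<^sub>2"
proof -
  have "sum g {0..N} = g 0 + sum g {Suc 0..N}"
    by (rule sum.atLeast_Suc_atMost) simp
  moreover have "sum g {Suc 0..N} \<in> C\<^sub>2"
    using assms subspace_sum[OF subspace_C2, of "{Suc 0..N}" g] by simp
  ultimately show ?thesis by simp
qed

lemma mode_of_derivative: "md (md u (-2) vac) p w + sc (of_int p) (md u (p - 1) w) = 0"
proof -
  obtain K where K: "\<And>N. N \<ge> K \<Longrightarrow> borch_lhs md sc u vac w p 0 (-2) N = borch_rhs md sc u vac w p 0 (-2) N"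
    using borcherds by blast
  define N where "N = max K 2"
  have "borch_lhs md sc u vac w p 0 (-2) N = md (md u (-2) vac) p w + sc (of_int p) (md u (p - 1) w)"
    unfolding borch_lhs_def
    by (subst sum_atLeast0_atMost_eq_first_two) (auto simp: N_def creation creation_id)
  moreover have "borch_rhs md sc u vac w p 0 (-2) N = 0"
    unfolding borch_rhs_def by (rule sum.neutral) (auto simp: vacuum)
  ultimately show ?thesis using K[of N] N_def by simp
qed

lemma mode_le_minus_two_in_C2:
  assumes "n \<le> -2"
  shows "md u n w \<in> C\<^sub>2"
proof -
  have "md u (- int k) w \<in> C\<^sub>2" if "k \<ge> 2" for k
    using that
  proof (induction k arbitrary: u rule: nat_induct_at_least)
    case (Suc k)
    have "md (md u (-2) vac) (- int k) w + sc (of_int (- int k)) (md u (- int k - 1) w) = 0"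
      by (rule mode_of_derivative)
    then have "md u (- int k - 1) w = sc (- 1 / of_int (- int k)) (md (md u (-2) vac) (- int k) w)"
      by (rule scale_eq_of_add_scale_eq_0) (use Suc.hyps in simp)
    then have "md u (- int k - 1) w \<in> C\<^sub>2"
      using Suc.IH subspace_scale[OF subspace_C2] by simp
    moreover have "- int (Suc k) = - int k - 1" by simp
    ultimately show ?case by (simp only:)
  qed (simp add: mode_minus_two_in_C2)
  from this[of "nat (- n)"] show ?thesis using assms by simp
qed

lemma borch_lhs_minus_one_mod_C2:
  "borch_lhs md sc u v w (-1) 0 r N - md (md u r v) (-1) w \<in> C\<^sub>2"
  using sum_diff_first_in_C2[of "\<lambda>i. sc ((of_int (-1) :: complex) gchoose i)
      (md (md u (r + int i) v) (-1 + 0 - int i) w)" N]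
  unfolding borch_lhs_def by (simp add: mode_le_minus_two_in_C2 subspace_scale[OF subspace_C2])

lemma skew_symmetry_mod_C2: "md u r v + sc ((-1) powi r) (md v r u) \<in> C\<^sub>2"
proof -
  obtain K where K: "\<And>N. N \<ge> K \<Longrightarrow> borch_lhs md sc u v vac (-1) 0 r N = borch_rhs md sc u v vac (-1) 0 r N"
    using borcherds by blast
  define N where "N = max K 1"
  have "borch_lhs md sc u v vac (-1) 0 r N - md u r v \<in> C\<^sub>2"
    using borch_lhs_minus_one_mod_C2[of u v vac r N] by (simp add: creation_id)
  moreover have "borch_rhs md sc u v vac (-1) 0 r N = - sc ((-1) powi r) (md v r u)"
    unfolding borch_rhs_def
    by (subst sum_atLeast0_atMost_eq_first) (auto simp: creation creation_id)
  ultimately have "- sc ((-1) powi r) (md v r u) - md u r v \<in> C\<^sub>2"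
    using K[of N] N_def by simp
  then have "- (- sc ((-1) powi r) (md v r u) - md u r v) \<in> C\<^sub>2"
    by (rule subspace_neg[OF subspace_C2])
  then show ?thesis by (simp add: algebra_simps)
qed

lemma commutator_formula:
  "\<exists>K. \<forall>N\<ge>K. (\<Sum>i=0..N. sc ((of_int p :: complex) gchoose i) (md (md u (int i) v) (p + q - int i) w))
      = md u p (md v q w) - md v q (md u p w)"
proof -
  obtain K where K: "\<And>N. N \<ge> K \<Longrightarrow> borch_lhs md sc u v w p q 0 N = borch_rhs md sc u v w p q 0 N"
    using borcherds by blast
  have "borch_rhs md sc u v w p q 0 N = md u p (md v q w) - md v q (md u p w)" for N
    unfolding borch_rhs_def by (subst sum_atLeast0_atMost_eq_first) (auto simp: gbinomial_0_left)
  then show ?thesis using K unfolding borch_lhs_def by auto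
qed

lemma nonpos_mode_preserves_C2:
  assumes "p \<le> 0" "c \<in> C\<^sub>2"
  shows "md w p c \<in> C\<^sub>2"
proof -
  have "md w p (md u (-2) v) \<in> C\<^sub>2" for u v
  proof -
    obtain K where K: "(\<Sum>i=0..K. sc ((of_int p :: complex) gchoose i) (md (md w (int i) u) (p + -2 - int i) v))
        = md w p (md u (-2) v) - md u (-2) (md w p v)"
      using commutator_formula by blast
    have "(\<Sum>i=0..K. sc ((of_int p :: complex) gchoose i) (md (md w (int i) u) (p + -2 - int i) v)) \<in> C\<^sub>2"
      using assms(1)
      by (intro subspace_sum[OF subspace_C2] subspace_scale[OF subspace_C2] mode_le_minus_two_in_C2) simp
    then show ?thesis
      using K subspace_add[OF subspace_C2 _ mode_minus_two_in_C2[of u "md w p v"]] by fastforce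
  qed
  note generator = this
  from assms(2) show ?thesis
    unfolding C2_def
  proof (induction rule: span_induct_alt)
    case (step a x y)
    then have "md w p x \<in> C\<^sub>2" using generator by blast
    with step show ?case
      unfolding C2_def by (simp add: md_add_right md_scale_right span_add span_scale)
  qed (simp add: span_zero)
qed

lemma zero_mode_derivation: "md b 0 (md v (-1) x) = md (md b 0 v) (-1) x + md v (-1) (md b 0 x)"
proof -
  obtain K where K: "(\<Sum>i=0..K. sc ((of_int 0 :: complex) gchoose i) (md (md b (int i) v) (0 + -1 - int i) x))
      = md b 0 (md v (-1) x) - md v (-1) (md b 0 x)"
    using commutator_formula by blast
  moreover have "(\<Sum>i=0..K. sc ((of_int 0 :: complex) gchoose i) (md (md b (int i) v) (0 + -1 - int i) x))
      = md (md b 0 v) (-1) x"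
    by (subst sum_atLeast0_atMost_eq_first) (auto simp: gbinomial_0_left)
  ultimately show ?thesis by (simp add: algebra_simps)
qed

lemma associativity_mod_C2: "md (md u (-1) v) (-1) w - md v (-1) (md u (-1) w) \<in> C\<^sub>2"
proof -
  obtain K where K: "borch_lhs md sc u v w (-1) 0 (-1) K = borch_rhs md sc u v w (-1) 0 (-1) K"
    using borcherds by blast
  let ?X = "md u (-2) (md v 0 w)" and ?Y = "md v (-1) (md u (-1) w)"
  have "borch_rhs md sc u v w (-1) 0 (-1) K - (?X + ?Y) \<in> C\<^sub>2"
  proof -
    have "borch_rhs md sc u v w (-1) 0 (-1) K
       - (\<lambda>i. sc ((-1) ^ i * ((of_int (-1) :: complex) gchoose i))
          (md u (-1 + -1 - int i) (md v (0 + int i) w)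
           - sc ((-1) powi (-1)) (md v (0 + -1 - int i) (md u (-1 + int i) w)))) 0 \<in> C\<^sub>2"
      unfolding borch_rhs_def
    proof (rule sum_diff_first_in_C2)
      fix i :: nat assume "i \<ge> 1"
      then have "md u (-1 + -1 - int i) (md v (0 + int i) w) \<in> C\<^sub>2"
        "md v (0 + -1 - int i) (md u (-1 + int i) w) \<in> C\<^sub>2"
        by (simp_all add: mode_le_minus_two_in_C2)
      then show "sc ((-1) ^ i * ((of_int (-1) :: complex) gchoose i))
          (md u (-1 + -1 - int i) (md v (0 + int i) w)
           - sc ((-1) powi (-1)) (md v (0 + -1 - int i) (md u (-1 + int i) w))) \<in> C\<^sub>2"
        by (intro subspace_scale[OF subspace_C2] subspace_diff[OF subspace_C2])
    qed
    then show ?thesis by (simp add: algebra_simps)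
  qed
  from subspace_add[OF subspace_C2 this mode_minus_two_in_C2[of u "md v 0 w"]]
  have "borch_lhs md sc u v w (-1) 0 (-1) K - ?Y \<in> C\<^sub>2"
    using K by simp
  from subspace_diff[OF subspace_C2 this borch_lhs_minus_one_mod_C2[of u v w "-1" K]]
  show ?thesis by simp
qed

end

sublocale vertex_algebra \<subseteq> Q: comm_algebra_mod sc "C2 sc md" "\<lambda>x y. md x (-1) y" vac
proof unfold_locales
  show "subspace (C2 sc md)" by (rule subspace_C2)
  show "md x (-1) w \<in> C2 sc md" if "w \<in> C2 sc md" for w x
    by (rule nonpos_mode_preserves_C2) (use that in simp_all)
  show "md x (-1) y - md y (-1) x \<in> C2 sc md" for x y
    using skew_symmetry_mod_C2[of x "-1" y] by simp
qed (simp_all add: md_add_left md_add_right md_scale_left md_scale_right associativity_mod_C2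
    vacuum creation_id)

context vertex_algebra
begin

lemma iter_replicate_minus_one: "iter md v (replicate k (-1)) = Q.mpow v (Suc k)"
  by (induction k) (simp_all add: iter_def Q.mpow_Suc creation_id)

lemma zero_mode_self_in_C2: "md v 0 v \<in> C\<^sub>2"
proof -
  have "sc 2 (md v 0 v) = md v 0 v + sc ((-1) powi 0) (md v 0 v)"
    by (metis one_add_one power_int_0_right scale_left_distrib scale_one)
  then have "sc 2 (md v 0 v) \<in> C\<^sub>2"
    using skew_symmetry_mod_C2[of v 0 v] by simp
  then have "sc (1/2) (sc 2 (md v 0 v)) \<in> C\<^sub>2"
    by (rule subspace_scale[OF subspace_C2])
  then show ?thesis by simp
qed

lemma zero_mode_mpow_in_C2: "md v 0 (Q.mpow v (Suc k)) \<in> C\<^sub>2"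
proof (induction k)
  case 0
  then show ?case using zero_mode_self_in_C2 by (simp add: Q.mpow_Suc creation_id)
next
  case (Suc k)
  have "md v 0 (Q.mpow v (Suc (Suc k)))
      = md (md v 0 v) (-1) (Q.mpow v (Suc k)) + md v (-1) (md v 0 (Q.mpow v (Suc k)))"
    by (simp add: Q.mpow_Suc[of v "Suc k"] zero_mode_derivation)
  moreover have "md (md v 0 v) (-1) (Q.mpow v (Suc k)) \<in> C\<^sub>2"
    using Q.mul_C_left[OF zero_mode_self_in_C2] .
  moreover have "md v (-1) (md v 0 (Q.mpow v (Suc k))) \<in> C\<^sub>2"
    using Suc.IH by (simp add: nonpos_mode_preserves_C2)
  ultimately show ?case by (simp add: subspace_add[OF subspace_C2])
qed

lemma iter_in_C2_or_mpow:
  assumes "set ns \<subseteq> {0, -1}"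
  shows "iter md v ns \<in> C\<^sub>2 \<or> iter md v ns = Q.mpow v (Suc (length ns))"
  using assms
proof (induction ns)
  case Nil
  then show ?case by (simp add: iter_def Q.mpow_Suc creation_id)
next
  case (Cons n ns)
  have n: "n = 0 \<or> n = -1" and iter: "iter md v (n # ns) = md v n (iter md v ns)"
    using Cons.prems by (auto simp: iter_def)
  from Cons consider "iter md v ns \<in> C\<^sub>2" | "iter md v ns = Q.mpow v (Suc (length ns))"
    by auto
  then show ?case
  proof cases
    case 1
    then show ?thesis using n iter nonpos_mode_preserves_C2 by auto
  next
    case 2
    then show ?thesis using n iter zero_mode_mpow_in_C2 by (auto simp: Q.mpow_Suc)
  qed
qed

lemma proj_zero_mode_mpow:
  "Q.proj (md b 0 (Q.mpow v (Suc k))) = sc (of_nat (Suc k)) (Q.proj (md (md b 0 v) (-1) (Q.mpow v k)))"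
proof (induction k)
  case 0
  then show ?case by (simp add: Q.mpow_Suc creation_id)
next
  case (Suc k)
  let ?d = "md b 0 v"
  have "Q.proj (md b 0 (Q.mpow v (Suc (Suc k))))
      = Q.proj (md ?d (-1) (Q.mpow v (Suc k))) + Q.qmul v (Q.proj (md b 0 (Q.mpow v (Suc k))))"
    by (simp add: Q.mpow_Suc[of v "Suc k"] zero_mode_derivation flip: Q.qmul_def)
  also have "Q.qmul v (Q.proj (md b 0 (Q.mpow v (Suc k))))
      = sc (of_nat (Suc k)) (Q.qmul v (Q.qmul ?d (Q.mpow v k)))"
    unfolding Suc by (simp flip: Q.qmul_def)
  also have "Q.qmul v (Q.qmul ?d (Q.mpow v k)) = Q.proj (md ?d (-1) (Q.mpow v (Suc k)))"
    by (metis Q.qmul_def Q.qmul_left_commute Q.qmul_proj_right Q.proj_mpow_Suc)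
  finally have "Q.proj (md b 0 (Q.mpow v (Suc (Suc k))))
      = Q.proj (md ?d (-1) (Q.mpow v (Suc k))) + sc (of_nat (Suc k)) (Q.proj (md ?d (-1) (Q.mpow v (Suc k))))" .
  moreover have "sc (of_nat (Suc (Suc k))) (Q.proj (md ?d (-1) (Q.mpow v (Suc k))))
      = Q.proj (md ?d (-1) (Q.mpow v (Suc k))) + sc (of_nat (Suc k)) (Q.proj (md ?d (-1) (Q.mpow v (Suc k))))"
    unfolding of_nat_Suc[of "Suc k"] scale_left_distrib by simp
  ultimately show ?case by (simp only:)
qed

lemma proj_zero_mode_skew: "Q.proj (md x 0 w) = - Q.proj (md w 0 x)"
proof -
  have "md x 0 w + md w 0 x \<in> C\<^sub>2" using skew_symmetry_mod_C2[of x 0 w] by simp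
  then show ?thesis using Q.proj_eq_0_iff by (simp add: eq_neg_iff_add_eq_0 flip: Q.proj_add)
qed

lemma zero_or_minus_one_mode_of_C2:
  assumes "x \<in> C\<^sub>2" "n \<in> {0, -1}"
  shows "md x n w \<in> C\<^sub>2"
proof (cases "n = 0")
  case True
  have "md w 0 x \<in> C\<^sub>2" using assms(1) by (simp add: nonpos_mode_preserves_C2)
  then have "Q.proj (md x 0 w) = 0"
    using proj_zero_mode_skew[of x w] Q.proj_eq_0_iff by simp
  then show ?thesis using True Q.proj_eq_0_iff by simp
next
  case False
  then show ?thesis using assms Q.mul_C_left by auto
qed

context
  fixes M
  assumes subspace_M: "subspace M" and C2_subset_M: "C\<^sub>2 \<subseteq> M"
begin

lemma r01_eq_rad: "r01 md M = Q.rad M"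
proof
  show "r01 md M \<subseteq> Q.rad M"
  proof
    fix v assume "v \<in> r01 md M"
    then obtain k where k: "\<And>ns. length ns \<ge> k \<Longrightarrow> set ns \<subseteq> {0, -1} \<Longrightarrow> iter md v ns \<in> M"
      unfolding r01_def by blast
    have "Q.mpow v (Suc j) \<in> M" if "j \<ge> k" for j
      using k[of "replicate j (-1)"] that iter_replicate_minus_one
      by (simp add: set_replicate_conv_if)
    then have "Q.mpow v t \<in> M" if "t \<ge> Suc k" for t
      using that by (metis Suc_le_D Suc_le_mono)
    then show "v \<in> Q.rad M" unfolding Q.rad_def by blast
  qed
next
  show "Q.rad M \<subseteq> r01 md M"
  proof
    fix v assume "v \<in> Q.rad M"
    then obtain k where k: "\<And>t. t \<ge> k \<Longrightarrow> Q.mpow v t \<in> M"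
      unfolding Q.rad_def by blast
    have "iter md v ns \<in> M" if "length ns \<ge> k" "set ns \<subseteq> {0, -1}" for ns
      using iter_in_C2_or_mpow[OF that(2), of v] C2_subset_M k[of "Suc (length ns)"] that(1) by auto
    then show "v \<in> r01 md M" unfolding r01_def by blast
  qed
qed

lemma rquot_eq_rad: "rquot md M = Q.rad M"
proof -
  have qpow: "qpow md a t = Q.mpow a t" if t: "t \<ge> 1" for a t
  proof -
    obtain j where "t = Suc j" using t by (cases t) auto
    then show ?thesis
      by (simp add: qpow_def Q.mpow_def funpow_Suc_right creation_id del: funpow.simps)
  qed
  show ?thesis
  proof
    show "rquot md M \<subseteq> Q.rad M" unfolding rquot_def Q.rad_def using qpow by force
    show "Q.rad M \<subseteq> rquot md M"
    proof
      fix a assume "a \<in> Q.rad M"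
      then obtain k where "\<And>t. t \<ge> k \<Longrightarrow> Q.mpow a t \<in> M" unfolding Q.rad_def by blast
      then have "\<forall>t\<ge>max k 1. qpow md a t \<in> M" using qpow by simp
      then show "a \<in> rquot md M" unfolding rquot_def by (intro CollectI exI[of _ "max k 1"]) simp
    qed
  qed
qed

lemma lsr01_subset_srad: "lsr01 md M \<subseteq> Q.srad M"
proof
  fix v assume v: "v \<in> lsr01 md M"
  show "v \<in> Q.srad M" unfolding Q.srad_def
  proof (intro CollectI allI)
    fix b
    from v obtain k where k: "\<forall>s ns. s \<in> {0, -1} \<and> length ns \<ge> k \<and> set ns \<subseteq> {0, -1}
        \<longrightarrow> md b s (iter md v ns) \<in> M"
      unfolding lsr01_def by blast
    have "md b (-1) (Q.mpow v (Suc j)) \<in> M" if "j \<ge> k" for j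
      using k[rule_format, of "-1" "replicate j (-1)"] that iter_replicate_minus_one
      by (simp add: set_replicate_conv_if)
    then have "md b (-1) (Q.mpow v t) \<in> M" if "t \<ge> Suc k" for t
      using that by (metis Suc_le_D Suc_le_mono)
    then show "\<exists>k. \<forall>t\<ge>k. md b (-1) (Q.mpow v t) \<in> M" by blast
  qed
qed

text \<open>For \<open>n = 0\<close> the element \<open>w\<^sub>0 v\<close> plays the role of \<open>b\<close>, because
  \<open>w\<^sub>0 v\<^sup>t \<equiv> t (w\<^sub>0 v) v\<^sup>t\<^sup>-\<^sup>1\<close> modulo \<open>C\<^sub>2(V)\<close>.\<close>

lemma srad_modes_in_M:
  assumes "v \<in> Q.srad M" "n \<in> {0, -1}"
  shows "\<exists>k. \<forall>t\<ge>k. md w n (Q.mpow v (Suc t)) \<in> M \<and> md (Q.mpow v (Suc t)) n w \<in> M"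
proof -
  obtain k1 where k1: "\<And>t. t \<ge> k1 \<Longrightarrow> md w (-1) (Q.mpow v t) \<in> M"
    using assms(1) unfolding Q.srad_def by blast
  obtain k2 where k2: "\<And>t. t \<ge> k2 \<Longrightarrow> md (md w 0 v) (-1) (Q.mpow v t) \<in> M"
    using assms(1) unfolding Q.srad_def by blast
  note proj_in_M = Q.proj_in_M_iff[OF subspace_M C2_subset_M]
  have "md w n (Q.mpow v (Suc t)) \<in> M \<and> md (Q.mpow v (Suc t)) n w \<in> M" if "t \<ge> max k1 k2" for t
  proof (cases "n = 0")
    case True
    have "Q.proj (md (md w 0 v) (-1) (Q.mpow v t)) \<in> M" using k2 that proj_in_M by simp
    then have "sc (of_nat (Suc t)) (Q.proj (md (md w 0 v) (-1) (Q.mpow v t))) \<in> M"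
      by (rule subspace_scale[OF subspace_M])
    then have "Q.proj (md w 0 (Q.mpow v (Suc t))) \<in> M"
      by (simp add: proj_zero_mode_mpow)
    moreover then have "Q.proj (md (Q.mpow v (Suc t)) 0 w) \<in> M"
      using proj_zero_mode_skew subspace_neg[OF subspace_M] by metis
    ultimately show ?thesis using True proj_in_M by simp
  next
    case False
    then have "n = -1" using assms(2) by simp
    have "md w (-1) (Q.mpow v (Suc t)) \<in> M" using k1 that by simp
    moreover have "Q.proj (md (Q.mpow v (Suc t)) (-1) w) = Q.proj (md w (-1) (Q.mpow v (Suc t)))"
      using Q.qmul_commute unfolding Q.qmul_def by blast
    ultimately show ?thesis using \<open>n = -1\<close> proj_in_M by metis
  qed
  then show ?thesis by blast
qed

lemma srad_subset_lsr01: "Q.srad M \<subseteq> lsr01 md M"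
proof
  fix v assume v: "v \<in> Q.srad M"
  show "v \<in> lsr01 md M" unfolding lsr01_def
  proof (intro CollectI allI)
    fix b
    obtain k0 where k0: "\<And>t. t \<ge> k0 \<Longrightarrow> md b 0 (Q.mpow v (Suc t)) \<in> M"
      using srad_modes_in_M[OF v, of 0] by blast
    obtain k1 where k1: "\<And>t. t \<ge> k1 \<Longrightarrow> md b (-1) (Q.mpow v (Suc t)) \<in> M"
      using srad_modes_in_M[OF v, of "-1"] by blast
    have "md b s (iter md v ns) \<in> M"
      if s: "s \<in> {0, -1}" and "length ns \<ge> max k0 k1" "set ns \<subseteq> {0, -1}" for s ns
    proof (cases "iter md v ns \<in> C\<^sub>2")
      case True
      moreover have "s \<le> 0" using s by auto
      ultimately show ?thesis using nonpos_mode_preserves_C2 C2_subset_M by blast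
    next
      case False
      then have "iter md v ns = Q.mpow v (Suc (length ns))"
        using iter_in_C2_or_mpow[OF that(3)] by blast
      then show ?thesis using s k0 k1 that(2) by auto
    qed
    then show "\<exists>m. \<forall>s ns. s \<in> {0, -1} \<and> m \<le> length ns \<and> set ns \<subseteq> {0, -1}
        \<longrightarrow> md b s (iter md v ns) \<in> M"
      by blast
  qed
qed

lemma srad_subset_rsr01: "Q.srad M \<subseteq> rsr01 md M"
proof
  fix v assume v: "v \<in> Q.srad M"
  show "v \<in> rsr01 md M" unfolding rsr01_def
  proof (intro CollectI allI)
    fix w
    obtain k0 where k0: "\<And>t. t \<ge> k0 \<Longrightarrow> md (Q.mpow v (Suc t)) 0 w \<in> M"
      using srad_modes_in_M[OF v, of 0 w] by blast
    obtain k1 where k1: "\<And>t. t \<ge> k1 \<Longrightarrow> md (Q.mpow v (Suc t)) (-1) w \<in> M"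
      using srad_modes_in_M[OF v, of "-1" w] by blast
    have "md (iter md v ns) n w \<in> M"
      if n: "n \<in> {0, -1}" and "length ns \<ge> max k0 k1" "set ns \<subseteq> {0, -1}" for n ns
    proof (cases "iter md v ns \<in> C\<^sub>2")
      case True
      then show ?thesis using n zero_or_minus_one_mode_of_C2 C2_subset_M by blast
    next
      case False
      then have "iter md v ns = Q.mpow v (Suc (length ns))"
        using iter_in_C2_or_mpow[OF that(3)] by blast
      then show ?thesis using n k0 k1 that(2) by auto
    qed
    then show "\<exists>m. \<forall>n ns. n \<in> {0, -1} \<and> m \<le> length ns \<and> set ns \<subseteq> {0, -1}
        \<longrightarrow> md (iter md v ns) n w \<in> M"
      by blast
  qed
qed

lemma sr01_eq_srad: "sr01 md M = Q.srad M"
  unfolding sr01_def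
  using lsr01_subset_srad srad_subset_lsr01 srad_subset_rsr01 by blast

end

end

theorem mainTheorem11:
  fixes sc :: "complex \<Rightarrow> 'v::ab_group_add \<Rightarrow> 'v"
    and md :: "'v \<Rightarrow> int \<Rightarrow> 'v \<Rightarrow> 'v"
    and vac :: 'v
    and M :: "'v set"
  assumes "vertex_algebra sc md vac"
    and "module.subspace sc M"
    and "C2 sc md \<subseteq> M"
    and "\<exists>F. finite F \<and> M \<subseteq> module.span sc (C2 sc md \<union> F)"
  shows "MZ01_subspace md M \<longleftrightarrow> quot_ideal sc md (rquot md M)"
proof -
  interpret vertex_algebra sc md vac by fact
  obtain F where F: "finite F" "M \<subseteq> span (C\<^sub>2 \<union> F)" using assms(4) by blast
  have "MZ01_subspace md M \<longleftrightarrow> Q.rad M = Q.srad M"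
    unfolding MZ01_subspace_def r01_eq_rad[OF assms(2,3)] sr01_eq_srad[OF assms(2,3)] ..
  also have "\<dots> \<longleftrightarrow> subspace (Q.rad M) \<and> (\<forall>a b. a \<in> Q.rad M \<longrightarrow> md b (-1) a \<in> Q.rad M)"
    by (rule Q.rad_eq_srad_iff_ideal[OF assms(2,3) F])
  also have "\<dots> \<longleftrightarrow> quot_ideal sc md (rquot md M)"
    unfolding quot_ideal_def rquot_eq_rad[OF assms(2,3)]
    using Q.C_subset_rad[OF assms(2,3)] by blast
  finally show ?thesis .
qed

end
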